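(* (i) On every weak nearly Sasakian manifold and on every weak nearly cosymplectic manifold $M^{2n+1}(f,Q,\xi,\eta,g)$, the vector field $\xi$ is geodesic ($\nabla_\xi\xi=0$); moreover, if $(\nabla_X\widetilde Q)Y=0$ for all $X\in TM$ and $Y\in\ker\eta$, then $\xi$ is a Killing vector field. (ii) There is no weak nearly cosymplectic structure satisfying $(\nabla_X\widetilde Q)Y=0$ for all $X\in TM$, $Y\in\ker\eta$, which is also a weak contact metric structure.
   Context: A weak almost contact metric structure on $M^{2n+1}$ consists of a $(1,1)$-tensor field $f$ of rank $2n$, a vector field $\xi$, a $1$-form $\eta$, a nonsingular $(1,1)$-tensor field $Q$ and a Riemannian metric $g$ such that $f^2=-Q+\eta\otimes\xi$, $\eta(\xi)=1$, $Q\xi=\xi$, $\ker\eta$ is $f$-invariant, and $g(fX,fY)=g(X,QY)-\eta(X)\eta(Y)$. $\widetilde Q=Q-\mathrm{id}$, $\nabla$ is the Levi-Civita connection of $g$. It is weak nearly Sasakian if $(\nabla_Xf)Y+(\nabla_Yf)X=2g(X,Y)\xi-\eta(Y)X-\eta(X)Y$ for all $X,Y$, and weak nearly cosymplectic if $(\nabla_Xf)Y+(\nabla_Yf)X=0$ for all $X,Y$. With $\Phi(X,Y)=g(X,fY)$ and $d\eta(X,Y)=\frac12\{X(\eta(Y))-Y(\eta(X))-\eta([X,Y])\}$, it is a weak contact metric structure if $d\eta=\Phi$. *)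

theory Defs
  imports "HOL-Analysis.Analysis"
begin

text \<open>Local coordinate model: the manifold is an open set U of real^'m (a chart),
  vector fields are maps real^'m => real^'m, (1,1)-tensor fields are matrix-valued,
  1-forms are covector-valued (eta(X) = eta p \<bullet> X p), and the metric is
  matrix-valued (g(X,Y) = X \<bullet> (g p *v Y)).\<close>

definition pd :: "'m::finite \<Rightarrow> (real^'m \<Rightarrow> real) \<Rightarrow> real^'m \<Rightarrow> real" where
  "pd i F p = frechet_derivative F (at p) (axis i 1)"

fun Ck :: "nat \<Rightarrow> (real^'m::finite) set \<Rightarrow> (real^'m \<Rightarrow> real) \<Rightarrow> bool" where
  "Ck 0 U F = continuous_on U F"
| "Ck (Suc k) U F = ((\<forall>p\<in>U. F differentiable (at p)) \<and> (\<forall>i. Ck k U (pd i F)))"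

definition smooth_fun :: "(real^'m::finite) set \<Rightarrow> (real^'m \<Rightarrow> real) \<Rightarrow> bool" where
  "smooth_fun U F \<longleftrightarrow> (\<forall>k. Ck k U F)"

definition smooth_vf :: "(real^'m::finite) set \<Rightarrow> (real^'m \<Rightarrow> real^'m) \<Rightarrow> bool" where
  "smooth_vf U X \<longleftrightarrow> (\<forall>i. smooth_fun U (\<lambda>p. X p $ i))"

definition smooth_tf :: "(real^'m::finite) set \<Rightarrow> (real^'m \<Rightarrow> real^'m^'m) \<Rightarrow> bool" where
  "smooth_tf U T \<longleftrightarrow> (\<forall>i j. smooth_fun U (\<lambda>p. T p $ i $ j))"

definition dir :: "(real^'m::finite \<Rightarrow> real^'m) \<Rightarrow> (real^'m \<Rightarrow> real) \<Rightarrow> real^'m \<Rightarrow> real" where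
  "dir X F p = (\<Sum>i\<in>UNIV. X p $ i * pd i F p)"

definition lie_bracket :: "(real^'m::finite \<Rightarrow> real^'m) \<Rightarrow> (real^'m \<Rightarrow> real^'m) \<Rightarrow> real^'m \<Rightarrow> real^'m" where
  "lie_bracket X Y p = (\<chi> k. dir X (\<lambda>q. Y q $ k) p - dir Y (\<lambda>q. X q $ k) p)"

definition gv :: "(real^'m::finite \<Rightarrow> real^'m^'m) \<Rightarrow> real^'m \<Rightarrow> real^'m \<Rightarrow> real^'m \<Rightarrow> real" where
  "gv g p u v = u \<bullet> (g p *v v)"

definition riemannian :: "(real^'m::finite) set \<Rightarrow> (real^'m \<Rightarrow> real^'m^'m) \<Rightarrow> bool" where
  "riemannian U g \<longleftrightarrow> smooth_tf U g \<and>
     (\<forall>p\<in>U. transpose (g p) = g p \<and> (\<forall>v. v \<noteq> 0 \<longrightarrow> v \<bullet> (g p *v v) > 0))"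

definition christoffel :: "(real^'m::finite \<Rightarrow> real^'m^'m) \<Rightarrow> 'm \<Rightarrow> 'm \<Rightarrow> 'm \<Rightarrow> real^'m \<Rightarrow> real" where
  "christoffel g k i j p = (1/2) * (\<Sum>l\<in>UNIV. matrix_inv (g p) $ k $ l *
      (pd i (\<lambda>q. g q $ j $ l) p + pd j (\<lambda>q. g q $ i $ l) p - pd l (\<lambda>q. g q $ i $ j) p))"

definition nabla :: "(real^'m::finite \<Rightarrow> real^'m^'m) \<Rightarrow> (real^'m \<Rightarrow> real^'m) \<Rightarrow> (real^'m \<Rightarrow> real^'m) \<Rightarrow> real^'m \<Rightarrow> real^'m" where
  "nabla g X Y p = (\<chi> k. dir X (\<lambda>q. Y q $ k) p +
      (\<Sum>i\<in>UNIV. \<Sum>j\<in>UNIV. christoffel g k i j p * X p $ i * Y p $ j))"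

definition nablaT :: "(real^'m::finite \<Rightarrow> real^'m^'m) \<Rightarrow> (real^'m \<Rightarrow> real^'m^'m) \<Rightarrow> (real^'m \<Rightarrow> real^'m) \<Rightarrow> (real^'m \<Rightarrow> real^'m) \<Rightarrow> real^'m \<Rightarrow> real^'m" where
  "nablaT g T X Y p = nabla g X (\<lambda>q. T q *v Y q) p - T p *v nabla g X Y p"

text \<open>Killing vector field: Lie derivative of g along xi vanishes, in coordinates
  (L_xi g)_ij = xi^k d_k g_ij + g_kj d_i xi^k + g_ik d_j xi^k.\<close>
definition killing :: "(real^'m::finite) set \<Rightarrow> (real^'m \<Rightarrow> real^'m^'m) \<Rightarrow> (real^'m \<Rightarrow> real^'m) \<Rightarrow> bool" where
  "killing U g xi \<longleftrightarrow> (\<forall>p\<in>U. \<forall>i j.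
      dir xi (\<lambda>q. g q $ i $ j) p
      + (\<Sum>k\<in>UNIV. g p $ k $ j * pd i (\<lambda>q. xi q $ k) p)
      + (\<Sum>k\<in>UNIV. g p $ i $ k * pd j (\<lambda>q. xi q $ k) p) = 0)"

text \<open>The (1,1)-tensor eta \<otimes> xi : X \<mapsto> eta(X) xi, as a matrix.\<close>
definition eta_xi :: "real^'m::finite \<Rightarrow> real^'m \<Rightarrow> real^'m^'m" where
  "eta_xi e x = (\<chi> i j. x $ i * e $ j)"

definition weak_acm :: "(real^'m::finite) set \<Rightarrow> (real^'m \<Rightarrow> real^'m^'m) \<Rightarrow> (real^'m \<Rightarrow> real^'m^'m) \<Rightarrow>
    (real^'m \<Rightarrow> real^'m) \<Rightarrow> (real^'m \<Rightarrow> real^'m) \<Rightarrow> (real^'m \<Rightarrow> real^'m^'m) \<Rightarrow> bool" where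
  "weak_acm U f Q xi eta g \<longleftrightarrow>
     open U \<and> riemannian U g \<and> smooth_tf U f \<and> smooth_tf U Q \<and> smooth_vf U xi \<and> smooth_vf U eta \<and>
     (\<forall>p\<in>U.
        rank (f p) = CARD('m) - 1 \<and>
        f p ** f p = - Q p + eta_xi (eta p) (xi p) \<and>
        eta p \<bullet> xi p = 1 \<and>
        Q p *v xi p = xi p \<and>
        invertible (Q p) \<and>
        (\<forall>v. eta p \<bullet> v = 0 \<longrightarrow> eta p \<bullet> (f p *v v) = 0) \<and>
        (\<forall>u v. gv g p (f p *v u) (f p *v v) = gv g p u (Q p *v v) - (eta p \<bullet> u) * (eta p \<bullet> v)))"

definition weak_nearly_sasakian where
  "weak_nearly_sasakian U f Q xi eta g \<longleftrightarrow> weak_acm U f Q xi eta g \<and>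
     (\<forall>X Y. smooth_vf U X \<longrightarrow> smooth_vf U Y \<longrightarrow> (\<forall>p\<in>U.
        nablaT g f X Y p + nablaT g f Y X p
          = (2 * gv g p (X p) (Y p)) *\<^sub>R xi p - (eta p \<bullet> Y p) *\<^sub>R X p - (eta p \<bullet> X p) *\<^sub>R Y p))"

definition weak_nearly_cosymplectic where
  "weak_nearly_cosymplectic U f Q xi eta g \<longleftrightarrow> weak_acm U f Q xi eta g \<and>
     (\<forall>X Y. smooth_vf U X \<longrightarrow> smooth_vf U Y \<longrightarrow> (\<forall>p\<in>U.
        nablaT g f X Y p + nablaT g f Y X p = 0))"

definition d_eta where
  "d_eta eta X Y p = (1/2) * (dir X (\<lambda>q. eta q \<bullet> Y q) p - dir Y (\<lambda>q. eta q \<bullet> X q) p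
                              - eta p \<bullet> lie_bracket X Y p)"

definition weak_contact_metric where
  "weak_contact_metric U f Q xi eta g \<longleftrightarrow> weak_acm U f Q xi eta g \<and>
     (\<forall>X Y. smooth_vf U X \<longrightarrow> smooth_vf U Y \<longrightarrow> (\<forall>p\<in>U.
        d_eta eta X Y p = gv g p (X p) (f p *v Y p)))"

definition Qtilde_parallel_ker where
  "Qtilde_parallel_ker U Q eta g \<longleftrightarrow>
     (\<forall>X Y. smooth_vf U X \<longrightarrow> smooth_vf U Y \<longrightarrow> (\<forall>p\<in>U. eta p \<bullet> Y p = 0) \<longrightarrow>
        (\<forall>p\<in>U. nablaT g (\<lambda>q. Q q - mat 1) X Y p = 0))"

end

theory Submission
  imports Defs
begin

text \<open>Work in a chart at a point \<open>p\<close>, with \<open>\<nabla> = d + \<Gamma>\<close>, and put \<open>A u = \<nabla>\<^sub>u \<xi>\<close> and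
  \<open>S = \<nabla>\<^sub>\<xi> f\<close>. Differentiating the pointwise identities \<open>f \<xi> = 0\<close>, \<open>g(\<xi>,\<xi>) = 1\<close>,
  \<open>g(fu,v) = -g(u,fv)\<close> and \<open>f\<^sup>2 = -Q + \<eta> \<otimes> \<xi>\<close> gives \<open>(\<nabla>\<^sub>u f)\<xi> = -f A u\<close>,
  \<open>\<eta>(A u) = 0\<close>, skewness of \<open>\<nabla>\<^sub>u f\<close>, and a formula for \<open>(\<nabla>\<^sub>u f) f + f (\<nabla>\<^sub>u f) + \<nabla>\<^sub>u Q\<close>.
  Both nearly conditions read \<open>(\<nabla>\<^sub>X f)Y + (\<nabla>\<^sub>Y f)X = c (2g(X,Y)\<xi> - \<eta>(Y)X - \<eta>(X)Y)\<close>
  with \<open>c = 1\<close> or \<open>c = 0\<close>. Taking \<open>X = Y = \<xi>\<close> gives \<open>f A \<xi> = 0\<close>, so \<open>A \<xi>\<close> lies in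
  \<open>ker f \<inter> ker \<eta> = 0\<close> and \<open>\<xi>\<close> is geodesic. Taking \<open>X = \<xi>\<close> gives \<open>S = f A + c (\<eta> \<otimes> \<xi> - id)\<close>.
  If \<open>Q - id\<close> is parallel on \<open>ker \<eta>\<close>, then \<open>\<nabla>\<^sub>\<xi> Q = 0\<close>, so \<open>S\<close> anticommutes with \<open>f\<close> and
  commutes with \<open>Q\<close>; hence \<open>Q A = -f S - c f\<close> is skew and commutes with \<open>Q\<close>, so \<open>A\<close> is skew,
  which is the Killing equation. In the cosymplectic case \<open>d\<eta>(u,v) = g(A u, v)\<close>, so the contact
  condition gives \<open>A = -f\<close> and \<open>S = -f\<^sup>2 = Q - \<eta> \<otimes> \<xi>\<close>; skewness of \<open>S\<close> then gives
  \<open>g(fv, fv) = 0\<close>, i.e. \<open>f = 0\<close>, contradicting \<open>rank f = 2n > 0\<close>.\<close>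

lemma matrix_inv_right: "invertible A \<Longrightarrow> A ** matrix_inv A = mat 1"
  unfolding invertible_def matrix_inv_def by (rule someI_ex[THEN conjunct1])

lemma inner_matrix_vector_mult_left: "u \<bullet> (v v* M) = (M *v u) \<bullet> (v::real^'n)"
  for M :: "real^'n^'n"
  by (metis dot_lmul_matrix inner_commute)

lemma inner_symmetric_matrix:
  fixes G :: "real^'n^'n"
  assumes "transpose G = G"
  shows "u \<bullet> (G *v v) = v \<bullet> (G *v u)"
proof -
  have "u \<bullet> (G *v v) = (transpose G *v u) \<bullet> v"
    by (simp add: dot_lmul_matrix[symmetric])
  then show ?thesis using assms by (simp add: inner_commute)
qed

lemma eta_xi_mult: "eta_xi e x *v v = (e \<bullet> v) *\<^sub>R x"
  by (simp add: eta_xi_def matrix_vector_mult_def vec_eq_iff inner_vec_def sum_distrib_left mult_ac)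

lemma matrix_vector_mult_axis: "(M *v axis j 1) $ k = M $ k $ j" for M :: "real^'n^'m"
  by (simp add: matrix_vector_mult_basis column_def)

lemma matrix_vector_mult_uminus: "A *v (- v) = - (A *v v)" for A :: "real^'n^'m"
  by (simp add: matrix_vector_mult_def vec_eq_iff sum_negf)

lemma pd_mult:
  assumes "F differentiable (at p)" "G differentiable (at p)"
  shows "pd i (\<lambda>q. F q * G q) p = pd i F p * G p + F p * pd i G p"
proof -
  have "((\<lambda>q. F q * G q) has_derivative
     (\<lambda>h. F p * frechet_derivative G (at p) h + frechet_derivative F (at p) h * G p)) (at p)"
    by (rule has_derivative_mult[OF assms[unfolded frechet_derivative_works]])
  then show ?thesis
    unfolding pd_def by (simp add: frechet_derivative_at[symmetric] mult.commute)
qed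

lemma pd_cmult:
  assumes "F differentiable (at p)"
  shows "pd i (\<lambda>q. c * F q) p = c * pd i F p"
  using pd_mult[of "\<lambda>_. c" p F i] assms by (simp add: pd_def)

lemma pd_add:
  assumes "F differentiable (at p)" "G differentiable (at p)"
  shows "pd i (\<lambda>q. F q + G q) p = pd i F p + pd i G p"
proof -
  have "((\<lambda>q. F q + G q) has_derivative
     (\<lambda>h. frechet_derivative F (at p) h + frechet_derivative G (at p) h)) (at p)"
    by (rule has_derivative_add[OF assms[unfolded frechet_derivative_works]])
  then show ?thesis unfolding pd_def by (simp add: frechet_derivative_at[symmetric])
qed

lemma pd_diff:
  assumes "F differentiable (at p)" "G differentiable (at p)"
  shows "pd i (\<lambda>q. F q - G q) p = pd i F p - pd i G p"
proof -
  have "((\<lambda>q. F q - G q) has_derivative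
     (\<lambda>h. frechet_derivative F (at p) h - frechet_derivative G (at p) h)) (at p)"
    by (rule has_derivative_diff[OF assms[unfolded frechet_derivative_works]])
  then show ?thesis unfolding pd_def by (simp add: frechet_derivative_at[symmetric])
qed

lemma pd_sum:
  assumes "finite I" "\<And>j. j \<in> I \<Longrightarrow> F j differentiable (at p)"
  shows "pd i (\<lambda>q. \<Sum>j\<in>I. F j q) p = (\<Sum>j\<in>I. pd i (F j) p)"
proof -
  have "((\<lambda>q. \<Sum>j\<in>I. F j q) has_derivative (\<lambda>h. \<Sum>j\<in>I. frechet_derivative (F j) (at p) h)) (at p)"
    using assms by (intro has_derivative_sum) (simp add: frechet_derivative_works[symmetric])
  then show ?thesis unfolding pd_def by (simp add: frechet_derivative_at[symmetric])
qed

lemma has_derivative_at_cong_open: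
  assumes "open U" "p \<in> U" "\<And>q. q \<in> U \<Longrightarrow> F q = G q"
  shows "(F has_derivative D) (at p) \<longleftrightarrow> (G has_derivative D) (at p)"
  using has_derivative_transform_within_open[OF _ assms(1,2)] assms(3) by (metis (no_types))

lemma differentiable_at_cong_open:
  assumes "open U" "p \<in> U" "\<And>q. q \<in> U \<Longrightarrow> F q = G q"
  shows "F differentiable (at p) \<longleftrightarrow> G differentiable (at p)"
  unfolding differentiable_def by (simp add: has_derivative_at_cong_open[OF assms])

lemma pd_cong_open:
  assumes "open U" "p \<in> U" "\<And>q. q \<in> U \<Longrightarrow> F q = G q"
  shows "pd i F p = pd i G p"
  unfolding pd_def frechet_derivative_def by (simp add: has_derivative_at_cong_open[OF assms])

lemma Ck_cong_open:
  assumes "open U" "Ck k U F" "\<And>q. q \<in> U \<Longrightarrow> F q = G q"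
  shows "Ck k U G"
  using assms(2,3)
proof (induction k arbitrary: F G)
  case 0
  then show ?case using continuous_on_cong[of U U F G] by simp
next
  case (Suc k)
  have "Ck k U (pd i G)" for i
  proof (rule Suc.IH)
    show "Ck k U (pd i F)" using Suc.prems(1) by simp
    show "pd i F q = pd i G q" if "q \<in> U" for q
      by (rule pd_cong_open[OF assms(1) that Suc.prems(2)])
  qed
  moreover have "G differentiable (at q)" if "q \<in> U" for q
    using Suc.prems differentiable_at_cong_open[OF assms(1) that, of F G] that by simp
  ultimately show ?case by simp
qed

lemma Ck_const:
  fixes U :: "(real^'m::finite) set"
  shows "Ck k U (\<lambda>_. c)"
proof (induction k arbitrary: c)
  case (Suc k)
  have "pd i (\<lambda>_. c) = (\<lambda>_::real^'m. 0)" for i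
    by (simp add: pd_def fun_eq_iff)
  then show ?case using Suc.IH by simp
qed simp

lemma Ck_linear_combination:
  fixes F :: "'a::finite \<Rightarrow> real^'m::finite \<Rightarrow> real"
  assumes "open U" "\<And>j. Ck k U (F j)"
  shows "Ck k U (\<lambda>q. \<Sum>j\<in>UNIV. c j * F j q)"
  using assms(2)
proof (induction k arbitrary: F)
  case 0
  then show ?case by (simp add: continuous_on_sum continuous_on_mult)
next
  case (Suc k)
  have "Ck k U (pd i (\<lambda>q. \<Sum>j\<in>UNIV. c j * F j q))" for i
  proof (rule Ck_cong_open[OF assms(1)])
    show "Ck k U (\<lambda>q. \<Sum>j\<in>UNIV. c j * pd i (F j) q)"
      using Suc by simp
    show "(\<Sum>j\<in>UNIV. c j * pd i (F j) q) = pd i (\<lambda>q. \<Sum>j\<in>UNIV. c j * F j q) q"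
      if "q \<in> U" for q
      using Suc.prems that by (simp add: pd_sum pd_cmult)
  qed
  moreover have "(\<lambda>q. \<Sum>j\<in>UNIV. c j * F j q) differentiable (at q)" if "q \<in> U" for q
    using Suc.prems that by simp
  ultimately show ?case by simp
qed

lemma smooth_vf_const: "smooth_vf U (\<lambda>_. v)"
  unfolding smooth_vf_def smooth_fun_def using Ck_const by blast

lemma smooth_vf_matrix_vector_mult_const:
  assumes "open U" "smooth_tf U T"
  shows "smooth_vf U (\<lambda>q. T q *v v)"
  unfolding smooth_vf_def smooth_fun_def
proof (intro allI)
  fix i k
  have "Ck k U (\<lambda>q. \<Sum>j\<in>UNIV. v $ j * T q $ i $ j)"
    using assms by (intro Ck_linear_combination) (auto simp: smooth_tf_def smooth_fun_def)
  then show "Ck k U (\<lambda>q. (T q *v v) $ i)"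
    by (simp add: matrix_vector_mult_def mult.commute)
qed

lemma smooth_fun_differentiable: "smooth_fun U F \<Longrightarrow> p \<in> U \<Longrightarrow> F differentiable (at p)"
  unfolding smooth_fun_def by (metis Ck.simps(2))

definition dderiv :: "real^'m::finite \<Rightarrow> (real^'m \<Rightarrow> real) \<Rightarrow> real^'m \<Rightarrow> real" where
  "dderiv u F p = (\<Sum>i\<in>UNIV. u $ i * pd i F p)"

definition dderiv_vec :: "(real^'m::finite \<Rightarrow> real^'m) \<Rightarrow> real^'m \<Rightarrow> real^'m \<Rightarrow> real^'m" where
  "dderiv_vec Y u p = (\<chi> k. dderiv u (\<lambda>q. Y q $ k) p)"

definition dderiv_mat :: "(real^'m::finite \<Rightarrow> real^'m^'m) \<Rightarrow> real^'m \<Rightarrow> real^'m \<Rightarrow> real^'m^'m" where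
  "dderiv_mat T u p = (\<chi> a b. dderiv u (\<lambda>q. T q $ a $ b) p)"

definition vf_differentiable_at :: "(real^'m::finite \<Rightarrow> real^'m) \<Rightarrow> real^'m \<Rightarrow> bool" where
  "vf_differentiable_at Y p \<longleftrightarrow> (\<forall>k. (\<lambda>q. Y q $ k) differentiable (at p))"

definition tf_differentiable_at :: "(real^'m::finite \<Rightarrow> real^'m^'m) \<Rightarrow> real^'m \<Rightarrow> bool" where
  "tf_differentiable_at T p \<longleftrightarrow> (\<forall>a b. (\<lambda>q. T q $ a $ b) differentiable (at p))"

text \<open>The connection matrix \<open>\<Gamma>(u)\<close>, so that \<open>\<nabla>\<^sub>u Y = dY(u) + \<Gamma>(u) Y\<close> and
  \<open>\<nabla>\<^sub>u T = dT(u) + [\<Gamma>(u), T]\<close>.\<close>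

definition christoffel_mat :: "(real^'m::finite \<Rightarrow> real^'m^'m) \<Rightarrow> real^'m \<Rightarrow> real^'m \<Rightarrow> real^'m^'m" where
  "christoffel_mat g u p = (\<chi> k j. \<Sum>i\<in>UNIV. u $ i * christoffel g k i j p)"

definition cov_vf :: "(real^'m::finite \<Rightarrow> real^'m^'m) \<Rightarrow> real^'m \<Rightarrow> (real^'m \<Rightarrow> real^'m) \<Rightarrow> real^'m \<Rightarrow> real^'m" where
  "cov_vf g u Y p = dderiv_vec Y u p + christoffel_mat g u p *v Y p"

definition cov_tf :: "(real^'m::finite \<Rightarrow> real^'m^'m) \<Rightarrow> real^'m \<Rightarrow> (real^'m \<Rightarrow> real^'m^'m) \<Rightarrow> real^'m \<Rightarrow> real^'m^'m" where
  "cov_tf g u T p = dderiv_mat T u p + christoffel_mat g u p ** T p - T p ** christoffel_mat g u p"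

lemma dderiv_const [simp]: "dderiv u (\<lambda>_. c) p = 0"
  by (simp add: dderiv_def pd_def)

lemma dderiv_axis: "dderiv (axis i 1) F p = pd i F p"
  by (simp add: dderiv_def axis_def if_distrib[of "\<lambda>z. z * _"] cong: if_cong)

lemma dderiv_mult:
  assumes "F differentiable (at p)" "G differentiable (at p)"
  shows "dderiv u (\<lambda>q. F q * G q) p = dderiv u F p * G p + F p * dderiv u G p"
  by (simp add: dderiv_def pd_mult[OF assms] algebra_simps sum.distrib sum_distrib_left)

lemma dderiv_add:
  assumes "F differentiable (at p)" "G differentiable (at p)"
  shows "dderiv u (\<lambda>q. F q + G q) p = dderiv u F p + dderiv u G p"
  by (simp add: dderiv_def pd_add[OF assms] algebra_simps sum.distrib)

lemma dderiv_diff: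
  assumes "F differentiable (at p)" "G differentiable (at p)"
  shows "dderiv u (\<lambda>q. F q - G q) p = dderiv u F p - dderiv u G p"
  by (simp add: dderiv_def pd_diff[OF assms] algebra_simps sum_subtractf)

lemma dderiv_sum:
  assumes "finite I" "\<And>j. j \<in> I \<Longrightarrow> F j differentiable (at p)"
  shows "dderiv u (\<lambda>q. \<Sum>j\<in>I. F j q) p = (\<Sum>j\<in>I. dderiv u (F j) p)"
proof -
  have "dderiv u (\<lambda>q. \<Sum>j\<in>I. F j q) p = (\<Sum>i\<in>UNIV. \<Sum>j\<in>I. u $ i * pd i (F j) p)"
    unfolding dderiv_def by (simp add: pd_sum[OF assms] sum_distrib_left)
  also have "\<dots> = (\<Sum>j\<in>I. dderiv u (F j) p)"
    unfolding dderiv_def by (rule sum.swap)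
  finally show ?thesis .
qed

lemma dderiv_cong_open:
  assumes "open U" "p \<in> U" "\<And>q. q \<in> U \<Longrightarrow> F q = G q"
  shows "dderiv u F p = dderiv u G p"
  unfolding dderiv_def using pd_cong_open[OF assms] by simp

lemma dir_eq_dderiv: "dir X F p = dderiv (X p) F p"
  by (simp add: dir_def dderiv_def)

lemma vf_differentiable_at_const [simp]: "vf_differentiable_at (\<lambda>_. v) p"
  by (simp add: vf_differentiable_at_def)

lemma tf_differentiable_at_const [simp]: "tf_differentiable_at (\<lambda>_. T) p"
  by (simp add: tf_differentiable_at_def)

lemma vf_differentiable_at_add:
  "vf_differentiable_at Y p \<Longrightarrow> vf_differentiable_at Z p \<Longrightarrow> vf_differentiable_at (\<lambda>q. Y q + Z q) p"
  unfolding vf_differentiable_at_def by (auto intro!: differentiable_add)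

lemma vf_differentiable_at_scaleR:
  "s differentiable (at p) \<Longrightarrow> vf_differentiable_at Y p \<Longrightarrow> vf_differentiable_at (\<lambda>q. s q *\<^sub>R Y q) p"
  unfolding vf_differentiable_at_def by (auto intro!: differentiable_mult)

lemma vf_differentiable_at_mult:
  "tf_differentiable_at T p \<Longrightarrow> vf_differentiable_at Y p \<Longrightarrow> vf_differentiable_at (\<lambda>q. T q *v Y q) p"
  unfolding tf_differentiable_at_def vf_differentiable_at_def matrix_vector_mult_def
  by (auto intro!: differentiable_sum differentiable_mult)

lemma tf_differentiable_at_diff:
  "tf_differentiable_at A p \<Longrightarrow> tf_differentiable_at B p \<Longrightarrow> tf_differentiable_at (\<lambda>q. A q - B q) p"
  unfolding tf_differentiable_at_def by (auto intro!: differentiable_diff)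

lemma inner_differentiable_at:
  "vf_differentiable_at Y p \<Longrightarrow> vf_differentiable_at Z p \<Longrightarrow> (\<lambda>q. Y q \<bullet> Z q) differentiable (at p)"
  unfolding vf_differentiable_at_def inner_vec_def by (auto intro!: differentiable_sum differentiable_mult)

lemma smooth_vf_differentiable_at: "smooth_vf U Y \<Longrightarrow> p \<in> U \<Longrightarrow> vf_differentiable_at Y p"
  unfolding smooth_vf_def vf_differentiable_at_def using smooth_fun_differentiable by blast

lemma smooth_tf_differentiable_at: "smooth_tf U T \<Longrightarrow> p \<in> U \<Longrightarrow> tf_differentiable_at T p"
  unfolding smooth_tf_def tf_differentiable_at_def using smooth_fun_differentiable by blast

lemma dderiv_vec_const [simp]: "dderiv_vec (\<lambda>_. v) u p = 0"
  by (simp add: dderiv_vec_def vec_eq_iff)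

lemma dderiv_vec_cong_open:
  assumes "open U" "p \<in> U" "\<And>q. q \<in> U \<Longrightarrow> Y q = Z q"
  shows "dderiv_vec Y u p = dderiv_vec Z u p"
proof -
  have "dderiv u (\<lambda>q. Y q $ k) p = dderiv u (\<lambda>q. Z q $ k) p" for k
    by (rule dderiv_cong_open[OF assms(1,2)]) (simp add: assms(3))
  then show ?thesis unfolding dderiv_vec_def by simp
qed

lemma dderiv_vec_add:
  "vf_differentiable_at Y p \<Longrightarrow> vf_differentiable_at Z p \<Longrightarrow>
    dderiv_vec (\<lambda>q. Y q + Z q) u p = dderiv_vec Y u p + dderiv_vec Z u p"
  unfolding vf_differentiable_at_def dderiv_vec_def by (simp add: vec_eq_iff dderiv_add)

lemma dderiv_vec_diff:
  "vf_differentiable_at Y p \<Longrightarrow> vf_differentiable_at Z p \<Longrightarrow>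
    dderiv_vec (\<lambda>q. Y q - Z q) u p = dderiv_vec Y u p - dderiv_vec Z u p"
  unfolding vf_differentiable_at_def dderiv_vec_def by (simp add: vec_eq_iff dderiv_diff)

lemma dderiv_vec_scaleR:
  "s differentiable (at p) \<Longrightarrow> vf_differentiable_at Y p \<Longrightarrow>
    dderiv_vec (\<lambda>q. s q *\<^sub>R Y q) u p = dderiv u s p *\<^sub>R Y p + s p *\<^sub>R dderiv_vec Y u p"
  unfolding dderiv_vec_def vf_differentiable_at_def by (simp add: vec_eq_iff dderiv_mult)

lemma dderiv_vec_mult:
  assumes "tf_differentiable_at T p" "vf_differentiable_at Y p"
  shows "dderiv_vec (\<lambda>q. T q *v Y q) u p = dderiv_mat T u p *v Y p + T p *v dderiv_vec Y u p"
proof -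
  have "dderiv u (\<lambda>q. \<Sum>j\<in>UNIV. T q $ k $ j * Y q $ j) p
      = (\<Sum>j\<in>UNIV. dderiv u (\<lambda>q. T q $ k $ j) p * Y p $ j + T p $ k $ j * dderiv u (\<lambda>q. Y q $ j) p)" for k
    using assms unfolding tf_differentiable_at_def vf_differentiable_at_def
    by (subst dderiv_sum) (auto intro!: differentiable_mult simp: dderiv_mult)
  then show ?thesis
    unfolding dderiv_vec_def dderiv_mat_def matrix_vector_mult_def by (simp add: vec_eq_iff sum.distrib)
qed

lemma dderiv_inner:
  assumes "vf_differentiable_at Y p" "vf_differentiable_at Z p"
  shows "dderiv u (\<lambda>q. Y q \<bullet> Z q) p = dderiv_vec Y u p \<bullet> Z p + Y p \<bullet> dderiv_vec Z u p"
proof -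
  have "dderiv u (\<lambda>q. \<Sum>k\<in>UNIV. Y q $ k * Z q $ k) p
      = (\<Sum>k\<in>UNIV. dderiv u (\<lambda>q. Y q $ k) p * Z p $ k + Y p $ k * dderiv u (\<lambda>q. Z q $ k) p)"
    using assms unfolding vf_differentiable_at_def
    by (subst dderiv_sum) (auto intro!: differentiable_mult simp: dderiv_mult)
  then show ?thesis unfolding dderiv_vec_def inner_vec_def by (simp add: sum.distrib)
qed

lemma dderiv_mat_const [simp]: "dderiv_mat (\<lambda>_. T) u p = 0"
  by (simp add: dderiv_mat_def vec_eq_iff)

lemma dderiv_mat_diff:
  "tf_differentiable_at A p \<Longrightarrow> tf_differentiable_at B p \<Longrightarrow>
    dderiv_mat (\<lambda>q. A q - B q) u p = dderiv_mat A u p - dderiv_mat B u p"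
  unfolding tf_differentiable_at_def dderiv_mat_def by (simp add: vec_eq_iff dderiv_diff)

lemma nabla_eq_cov_vf: "nabla g X Y p = cov_vf g (X p) Y p"
proof -
  have "(\<Sum>j\<in>UNIV. (\<Sum>i\<in>UNIV. X p $ i * christoffel g k i j p) * Y p $ j)
     = (\<Sum>i\<in>UNIV. \<Sum>j\<in>UNIV. christoffel g k i j p * X p $ i * Y p $ j)" for k
    unfolding sum_distrib_right by (subst sum.swap) (simp add: mult_ac)
  then show ?thesis
    unfolding nabla_def cov_vf_def dderiv_vec_def christoffel_mat_def matrix_vector_mult_def
    by (simp add: vec_eq_iff dir_eq_dderiv)
qed

lemma cov_vf_const: "cov_vf g u (\<lambda>_. v) p = christoffel_mat g u p *v v"
  by (simp add: cov_vf_def)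

lemma cov_vf_cong_open:
  assumes "open U" "p \<in> U" "\<And>q. q \<in> U \<Longrightarrow> Y q = Z q"
  shows "cov_vf g u Y p = cov_vf g u Z p"
  unfolding cov_vf_def using dderiv_vec_cong_open[OF assms] assms(2,3) by simp

lemma cov_vf_eq_0_open:
  assumes "open U" "p \<in> U" "\<And>q. q \<in> U \<Longrightarrow> Y q = 0"
  shows "cov_vf g u Y p = 0"
  using cov_vf_cong_open[OF assms(1,2), of Y "\<lambda>_. 0"] assms(3) by (simp add: cov_vf_const)

lemma cov_vf_add:
  "vf_differentiable_at Y p \<Longrightarrow> vf_differentiable_at Z p \<Longrightarrow>
    cov_vf g u (\<lambda>q. Y q + Z q) p = cov_vf g u Y p + cov_vf g u Z p"
  by (simp add: cov_vf_def dderiv_vec_add algebra_simps)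

lemma cov_vf_diff:
  "vf_differentiable_at Y p \<Longrightarrow> vf_differentiable_at Z p \<Longrightarrow>
    cov_vf g u (\<lambda>q. Y q - Z q) p = cov_vf g u Y p - cov_vf g u Z p"
  by (simp add: cov_vf_def dderiv_vec_diff algebra_simps)

lemma cov_vf_scaleR:
  "s differentiable (at p) \<Longrightarrow> vf_differentiable_at Y p \<Longrightarrow>
    cov_vf g u (\<lambda>q. s q *\<^sub>R Y q) p = dderiv u s p *\<^sub>R Y p + s p *\<^sub>R cov_vf g u Y p"
  by (simp add: cov_vf_def dderiv_vec_scaleR algebra_simps)

lemma cov_vf_mult:
  assumes "tf_differentiable_at T p" "vf_differentiable_at Y p"
  shows "cov_vf g u (\<lambda>q. T q *v Y q) p = cov_tf g u T p *v Y p + T p *v cov_vf g u Y p"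
  unfolding cov_vf_def cov_tf_def dderiv_vec_mult[OF assms]
  by (simp add: algebra_simps matrix_vector_mul_assoc)

lemma nablaT_eq_cov_tf:
  assumes "tf_differentiable_at T p" "vf_differentiable_at Y p"
  shows "nablaT g T X Y p = cov_tf g (X p) T p *v Y p"
  unfolding nablaT_def nabla_eq_cov_vf cov_vf_mult[OF assms] by simp

section \<open>The Levi-Civita connection in a chart\<close>

lemma riemannian_sym: "riemannian U g \<Longrightarrow> p \<in> U \<Longrightarrow> g p $ a $ b = g p $ b $ a"
proof -
  assume "riemannian U g" "p \<in> U"
  then have "transpose (g p) $ b $ a = g p $ b $ a" unfolding riemannian_def by simp
  then show ?thesis by (simp add: transpose_def)
qed

lemma riemannian_invertible:
  assumes "riemannian U g" "p \<in> U"
  shows "invertible (g p)"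
proof -
  have "g p *v v = 0 \<Longrightarrow> v = 0" for v
    using assms unfolding riemannian_def by force
  then show ?thesis using matrix_left_invertible_ker invertible_left_inverse by blast
qed

lemma pd_riemannian_sym:
  assumes "open U" "riemannian U g" "p \<in> U"
  shows "pd i (\<lambda>q. g q $ a $ b) p = pd i (\<lambda>q. g q $ b $ a) p"
  by (rule pd_cong_open[OF assms(1,3)]) (rule riemannian_sym[OF assms(2)])

lemma christoffel_sym:
  assumes "open U" "riemannian U g" "p \<in> U"
  shows "christoffel g k i j p = christoffel g k j i p"
  unfolding christoffel_def using pd_riemannian_sym[OF assms] by (simp add: algebra_simps)

lemma christoffel_lower:
  assumes "riemannian U g" "p \<in> U"
  shows "(\<Sum>k\<in>UNIV. g p $ l $ k * christoffel g k i j p)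
    = (1/2) * (pd i (\<lambda>q. g q $ j $ l) p + pd j (\<lambda>q. g q $ i $ l) p - pd l (\<lambda>q. g q $ i $ j) p)"
proof -
  define c where "c m = pd i (\<lambda>q. g q $ j $ m) p + pd j (\<lambda>q. g q $ i $ m) p - pd m (\<lambda>q. g q $ i $ j) p" for m
  have "(\<Sum>k\<in>UNIV. g p $ l $ k * christoffel g k i j p)
      = (1/2) * (\<Sum>k\<in>UNIV. \<Sum>m\<in>UNIV. g p $ l $ k * (matrix_inv (g p) $ k $ m * c m))"
    unfolding christoffel_def c_def by (simp add: sum_distrib_left mult_ac)
  also have "\<dots> = (1/2) * (\<Sum>m\<in>UNIV. \<Sum>k\<in>UNIV. g p $ l $ k * (matrix_inv (g p) $ k $ m * c m))"
    by (subst sum.swap) rule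
  also have "\<dots> = (1/2) * (\<Sum>m\<in>UNIV. (g p ** matrix_inv (g p)) $ l $ m * c m)"
    by (simp add: matrix_matrix_mult_def sum_distrib_right sum_distrib_left mult_ac)
  also have "\<dots> = (1/2) * c l"
    unfolding matrix_inv_right[OF riemannian_invertible[OF assms]]
    by (simp add: mat_def if_distrib[of "\<lambda>z. z * _"] cong: if_cong)
  finally show ?thesis unfolding c_def .
qed

lemma christoffel_mat_sym:
  assumes "open U" "riemannian U g" "p \<in> U"
  shows "christoffel_mat g u p *v v = christoffel_mat g v p *v u"
proof -
  have "(\<Sum>j\<in>UNIV. (\<Sum>i\<in>UNIV. u $ i * christoffel g k i j p) * v $ j)
      = (\<Sum>j\<in>UNIV. (\<Sum>i\<in>UNIV. v $ i * christoffel g k i j p) * u $ j)" for k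
  proof -
    have "(\<Sum>j\<in>UNIV. (\<Sum>i\<in>UNIV. u $ i * christoffel g k i j p) * v $ j)
        = (\<Sum>j\<in>UNIV. \<Sum>i\<in>UNIV. u $ i * v $ j * christoffel g k i j p)"
      by (simp add: sum_distrib_right sum_distrib_left mult_ac)
    also have "\<dots> = (\<Sum>i\<in>UNIV. \<Sum>j\<in>UNIV. u $ i * v $ j * christoffel g k i j p)"
      by (rule sum.swap)
    also have "\<dots> = (\<Sum>i\<in>UNIV. \<Sum>j\<in>UNIV. v $ j * u $ i * christoffel g k j i p)"
      using christoffel_sym[OF assms] by (simp add: mult_ac)
    also have "\<dots> = (\<Sum>i\<in>UNIV. (\<Sum>j\<in>UNIV. v $ j * christoffel g k j i p) * u $ i)"
      by (simp add: sum_distrib_right sum_distrib_left mult_ac)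
    finally show ?thesis .
  qed
  then show ?thesis unfolding christoffel_mat_def matrix_vector_mult_def by (simp add: vec_eq_iff)
qed

lemma g_christoffel_mat:
  assumes "riemannian U g" "p \<in> U"
  shows "(g p ** christoffel_mat g u p) $ l $ j = (1/2) * (\<Sum>i\<in>UNIV. u $ i *
      (pd i (\<lambda>q. g q $ j $ l) p + pd j (\<lambda>q. g q $ i $ l) p - pd l (\<lambda>q. g q $ i $ j) p))"
proof -
  have "(g p ** christoffel_mat g u p) $ l $ j
      = (\<Sum>i\<in>UNIV. u $ i * (\<Sum>k\<in>UNIV. g p $ l $ k * christoffel g k i j p))"
    unfolding christoffel_mat_def matrix_matrix_mult_def
    by (simp add: sum_distrib_left mult_ac) (rule sum.swap)
  also have "\<dots> = (\<Sum>i\<in>UNIV. u $ i * ((1/2) *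
      (pd i (\<lambda>q. g q $ j $ l) p + pd j (\<lambda>q. g q $ i $ l) p - pd l (\<lambda>q. g q $ i $ j) p)))"
    by (simp only: christoffel_lower[OF assms])
  finally show ?thesis by (simp add: sum_distrib_left mult_ac)
qed

lemma dderiv_mat_metric:
  assumes "open U" "riemannian U g" "p \<in> U"
  shows "dderiv_mat g u p = transpose (christoffel_mat g u p) ** g p + g p ** christoffel_mat g u p"
proof -
  have "transpose (christoffel_mat g u p) ** g p = transpose (g p ** christoffel_mat g u p)"
    using assms(2,3) by (simp add: matrix_transpose_mul riemannian_def)
  moreover have "dderiv u (\<lambda>q. g q $ a $ b) p
      = (g p ** christoffel_mat g u p) $ b $ a + (g p ** christoffel_mat g u p) $ a $ b" for a b
    unfolding g_christoffel_mat[OF assms(2,3)] dderiv_def pd_riemannian_sym[OF assms, of _ b a]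
    by (simp add: sum_divide_distrib sum.distrib[symmetric] field_simps)
  ultimately show ?thesis unfolding dderiv_mat_def by (simp add: vec_eq_iff transpose_def)
qed

lemma dderiv_metric_inner:
  assumes "open U" "riemannian U g" "p \<in> U" "vf_differentiable_at Y p" "vf_differentiable_at Z p"
  shows "dderiv u (\<lambda>q. Y q \<bullet> (g q *v Z q)) p
     = cov_vf g u Y p \<bullet> (g p *v Z p) + Y p \<bullet> (g p *v cov_vf g u Z p)"
proof -
  have g: "tf_differentiable_at g p"
    using assms(2,3) smooth_tf_differentiable_at unfolding riemannian_def by blast
  have "dderiv u (\<lambda>q. Y q \<bullet> (g q *v Z q)) p
      = dderiv_vec Y u p \<bullet> (g p *v Z p) + Y p \<bullet> (dderiv_mat g u p *v Z p + g p *v dderiv_vec Z u p)"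
    using assms(4,5) g by (simp add: dderiv_inner vf_differentiable_at_mult dderiv_vec_mult)
  then show ?thesis
    unfolding cov_vf_def dderiv_mat_metric[OF assms(1-3)]
    by (simp add: algebra_simps matrix_vector_mul_assoc[symmetric] inner_matrix_vector_mult_left)
qed

section \<open>Linear algebra of a weak almost contact metric structure at a point\<close>

locale weak_acm_linear =
  fixes G F Q :: "real^'m::finite^'m" and x e :: "real^'m"
  assumes G_sym: "transpose G = G"
    and G_pos: "\<And>v. v \<noteq> 0 \<Longrightarrow> v \<bullet> (G *v v) > 0"
    and F_squared: "F ** F = - Q + eta_xi e x"
    and e_x: "e \<bullet> x = 1"
    and Q_x: "Q *v x = x"
    and Q_invertible: "invertible Q"
    and e_F_ker: "\<And>v. e \<bullet> v = 0 \<Longrightarrow> e \<bullet> (F *v v) = 0"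
    and F_compatible: "\<And>u v. (F *v u) \<bullet> (G *v (F *v v)) = u \<bullet> (G *v (Q *v v)) - (e \<bullet> u) * (e \<bullet> v)"
begin

lemma G_inner_commute: "u \<bullet> (G *v v) = v \<bullet> (G *v u)"
  by (rule inner_symmetric_matrix[OF G_sym])

lemma F_F_apply: "F *v (F *v v) = (e \<bullet> v) *\<^sub>R x - Q *v v"
  by (simp add: matrix_vector_mul_assoc F_squared algebra_simps eta_xi_mult)

lemma Q_Q_inv: "Q *v (matrix_inv Q *v v) = v"
  by (simp add: matrix_vector_mul_assoc matrix_inv_right[OF Q_invertible])

lemma Q_inj: "Q *v a = Q *v b \<Longrightarrow> a = b"
  using inj_matrix_vector_mult[OF Q_invertible] unfolding inj_def by blast

lemma ker_F:
  assumes "F *v w = 0"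
  shows "w = (e \<bullet> w) *\<^sub>R x"
proof (rule Q_inj)
  have "Q *v w = - (F *v (F *v w)) + (e \<bullet> w) *\<^sub>R x"
    using F_F_apply[of w] by simp
  then show "Q *v w = Q *v ((e \<bullet> w) *\<^sub>R x)"
    using assms by (simp add: matrix_vector_mult_scaleR Q_x)
qed

lemma F_x: "F *v x = 0"
proof -
  define w where "w = F *v x"
  have Fw: "F *v w = 0"
    using F_F_apply[of x] unfolding w_def by (simp add: e_x Q_x)
  then have w: "w = (e \<bullet> w) *\<^sub>R x" by (rule ker_F)
  then have "F *v w = (e \<bullet> w) *\<^sub>R w"
    unfolding w_def by (metis matrix_vector_mult_scaleR)
  then have "e \<bullet> w = 0 \<or> w = 0" using Fw by simp
  then show ?thesis using w unfolding w_def by auto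
qed

lemma G_x: "G *v x = e"
proof -
  have "u \<bullet> (G *v x) = u \<bullet> e" for u
    using F_compatible[of u x] by (simp add: F_x Q_x e_x inner_commute)
  then have "(G *v x - e) \<bullet> (G *v x - e) = 0"
    by (simp add: inner_diff_right)
  then show ?thesis by simp
qed

lemma inner_G_x: "u \<bullet> (G *v x) = e \<bullet> u"
  by (simp add: G_x inner_commute)

lemma x_inner_G: "x \<bullet> (G *v u) = e \<bullet> u"
  using inner_G_x G_inner_commute by metis

lemma x_G_x: "x \<bullet> (G *v x) = 1"
  by (simp add: x_inner_G e_x)

lemma e_F: "e \<bullet> (F *v v) = 0"
proof -
  have "e \<bullet> (v - (e \<bullet> v) *\<^sub>R x) = 0" by (simp add: inner_diff_right e_x)
  then have "e \<bullet> (F *v (v - (e \<bullet> v) *\<^sub>R x)) = 0" by (rule e_F_ker)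
  then show ?thesis by (simp add: algebra_simps F_x)
qed

lemma Q_self_adjoint: "u \<bullet> (G *v (Q *v v)) = (Q *v u) \<bullet> (G *v v)"
proof -
  have "u \<bullet> (G *v (Q *v v)) = (F *v u) \<bullet> (G *v (F *v v)) + (e \<bullet> u) * (e \<bullet> v)"
    using F_compatible[of u v] by simp
  also have "\<dots> = (F *v v) \<bullet> (G *v (F *v u)) + (e \<bullet> v) * (e \<bullet> u)"
    using G_inner_commute by simp
  also have "\<dots> = v \<bullet> (G *v (Q *v u))"
    using F_compatible[of v u] by simp
  finally show ?thesis using G_inner_commute by simp
qed

lemma e_Q: "e \<bullet> (Q *v v) = e \<bullet> v"
  using Q_self_adjoint[of x v] x_inner_G[of "Q *v v"] x_inner_G[of v] by (simp add: Q_x)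

lemma F_Q_commute: "F *v (Q *v v) = Q *v (F *v v)"
proof -
  have "F *v (Q *v v) = F *v ((e \<bullet> v) *\<^sub>R x) - F *v (F *v (F *v v))"
    using F_F_apply[of v] by (simp add: matrix_vector_mult_diff_distrib)
  also have "\<dots> = (e \<bullet> (F *v v)) *\<^sub>R x - F *v (F *v (F *v v))"
    by (simp add: matrix_vector_mult_scaleR F_x e_F)
  also have "\<dots> = Q *v (F *v v)"
    using F_F_apply[of "F *v v"] by simp
  finally show ?thesis .
qed

lemma F_skew: "(F *v u) \<bullet> (G *v v) = - (u \<bullet> (G *v (F *v v)))"
proof -
  define v' where "v' = matrix_inv Q *v v"
  have "(F *v u) \<bullet> (G *v (F *v (F *v v'))) = u \<bullet> (G *v (Q *v (F *v v')))"
    using F_compatible[of u "F *v v'"] by (simp add: e_F)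
  moreover have "(F *v u) \<bullet> (G *v (F *v (F *v v'))) = - ((F *v u) \<bullet> (G *v (Q *v v')))"
    unfolding F_F_apply by (simp add: algebra_simps inner_G_x e_F)
  ultimately show ?thesis
    unfolding v'_def by (simp add: F_Q_commute[symmetric] Q_Q_inv)
qed

lemma G_nondegenerate:
  assumes "\<And>v. a \<bullet> (G *v v) = b \<bullet> (G *v v)"
  shows "a = b"
proof (rule ccontr)
  assume "a \<noteq> b"
  then have "(a - b) \<bullet> (G *v (a - b)) > 0" using G_pos[of "a - b"] by simp
  moreover have "(a - b) \<bullet> (G *v (a - b)) = 0" using assms[of "a - b"] by (simp add: inner_diff_left)
  ultimately show False by simp
qed

text \<open>Needed because for \<open>Q \<noteq> id\<close> the structure equations only show that \<open>Q \<nabla>\<xi>\<close>,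
  not \<open>\<nabla>\<xi>\<close> itself, is skew and commutes with \<open>Q\<close>.\<close>

lemma skew_if_Q_comp_skew:
  assumes QA: "\<And>v. Q *v A v = B v"
    and B_skew: "\<And>u w. B u \<bullet> (G *v w) = - (u \<bullet> (G *v B w))"
    and B_Q: "\<And>v. B (Q *v v) = Q *v B v"
  shows "A u \<bullet> (G *v v) = - (u \<bullet> (G *v A v))"
proof -
  define u' where "u' = matrix_inv Q *v u"
  define v' where "v' = matrix_inv Q *v v"
  have u: "u = Q *v u'" and v: "v = Q *v v'"
    unfolding u'_def v'_def by (simp_all add: Q_Q_inv)
  have "A u \<bullet> (G *v v) = B u \<bullet> (G *v v')"
    unfolding v Q_self_adjoint QA ..
  also have "\<dots> = B u' \<bullet> (G *v v)"
    unfolding u v B_Q Q_self_adjoint ..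
  also have "\<dots> = - (u' \<bullet> (G *v B v))"
    by (rule B_skew)
  also have "\<dots> = - (u \<bullet> (G *v A v))"
    unfolding u v B_Q QA[symmetric] Q_self_adjoint ..
  finally show ?thesis .
qed

end

section \<open>Differentiated structure identities\<close>

locale weak_acm_at =
  fixes U :: "(real^'m::finite) set" and f Q xi eta g p
  assumes acm: "weak_acm U f Q xi eta g" and p_in_U: "p \<in> U"
begin

lemma pointwise_weak_acm_linear: "q \<in> U \<Longrightarrow> weak_acm_linear (g q) (f q) (Q q) (xi q) (eta q)"
  using acm unfolding weak_acm_def riemannian_def gv_def weak_acm_linear_def by blast

sublocale pt: weak_acm_linear "g p" "f p" "Q p" "xi p" "eta p"
  by (rule pointwise_weak_acm_linear[OF p_in_U])

lemma open_U: "open U"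
  using acm unfolding weak_acm_def by blast

lemma riemannian_g: "riemannian U g"
  using acm unfolding weak_acm_def by blast

lemma smooth_xi: "smooth_vf U xi"
  using acm unfolding weak_acm_def by blast

lemma smooth_f: "smooth_tf U f"
  using acm unfolding weak_acm_def by blast

lemma differentiable_at_p:
  "tf_differentiable_at f p" "tf_differentiable_at Q p" "tf_differentiable_at g p"
  "vf_differentiable_at xi p" "vf_differentiable_at eta p"
  using acm p_in_U smooth_tf_differentiable_at smooth_vf_differentiable_at
  unfolding weak_acm_def riemannian_def by blast+

lemma vf_differentiable_at_f_const: "vf_differentiable_at (\<lambda>q. f q *v v) p"
  using vf_differentiable_at_mult[OF differentiable_at_p(1), of "\<lambda>_. v"] by simp

lemma cov_vf_cong:
  assumes "\<And>q. q \<in> U \<Longrightarrow> Y q = Z q"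
  shows "cov_vf g u Y p = cov_vf g u Z p"
  by (rule cov_vf_cong_open[OF open_U p_in_U assms])

lemma dderiv_cong:
  assumes "\<And>q. q \<in> U \<Longrightarrow> F q = G q"
  shows "dderiv u F p = dderiv u G p"
  by (rule dderiv_cong_open[OF open_U p_in_U assms])

lemma dderiv_g_inner:
  "vf_differentiable_at Y p \<Longrightarrow> vf_differentiable_at Z p \<Longrightarrow>
   dderiv u (\<lambda>q. Y q \<bullet> (g q *v Z q)) p
     = cov_vf g u Y p \<bullet> (g p *v Z p) + Y p \<bullet> (g p *v cov_vf g u Z p)"
  by (rule dderiv_metric_inner[OF open_U riemannian_g p_in_U])

lemma cov_f_xi: "cov_tf g u f p *v xi p = - (f p *v cov_vf g u xi p)"
proof -
  have "cov_vf g u (\<lambda>q. f q *v xi q) p = 0"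
    by (rule cov_vf_eq_0_open[OF open_U p_in_U]) (rule weak_acm_linear.F_x[OF pointwise_weak_acm_linear])
  then show ?thesis
    unfolding cov_vf_mult[OF differentiable_at_p(1,4)] by (simp add: add_eq_0_iff)
qed

lemma eta_cov_xi: "eta p \<bullet> cov_vf g u xi p = 0"
proof -
  have "dderiv u (\<lambda>q. xi q \<bullet> (g q *v xi q)) p = dderiv u (\<lambda>_. 1) p"
    by (rule dderiv_cong) (rule weak_acm_linear.x_G_x[OF pointwise_weak_acm_linear])
  then have "cov_vf g u xi p \<bullet> (g p *v xi p) + xi p \<bullet> (g p *v cov_vf g u xi p) = 0"
    unfolding dderiv_g_inner[OF differentiable_at_p(4,4)] by simp
  then show ?thesis by (simp add: pt.inner_G_x pt.x_inner_G)
qed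

lemma cov_f_skew:
  "(cov_tf g u f p *v v) \<bullet> (g p *v w) = - (v \<bullet> (g p *v (cov_tf g u f p *v w)))"
proof -
  have gw: "vf_differentiable_at (\<lambda>q. g q *v w) p" and gfw: "vf_differentiable_at (\<lambda>q. g q *v (f q *v w)) p"
    using vf_differentiable_at_mult[OF differentiable_at_p(3)] vf_differentiable_at_f_const by auto
  have "dderiv u (\<lambda>q. (f q *v v) \<bullet> (g q *v w) + v \<bullet> (g q *v (f q *v w))) p = dderiv u (\<lambda>_. 0) p"
    by (rule dderiv_cong) (simp add: weak_acm_linear.F_skew[OF pointwise_weak_acm_linear])
  then have "dderiv u (\<lambda>q. (f q *v v) \<bullet> (g q *v w)) p + dderiv u (\<lambda>q. v \<bullet> (g q *v (f q *v w))) p = 0"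
    by (simp add: dderiv_add inner_differentiable_at vf_differentiable_at_f_const gw gfw)
  then have "cov_vf g u (\<lambda>q. f q *v v) p \<bullet> (g p *v w) + (f p *v v) \<bullet> (g p *v cov_vf g u (\<lambda>_. w) p)
      + (cov_vf g u (\<lambda>_. v) p \<bullet> (g p *v (f p *v w)) + v \<bullet> (g p *v cov_vf g u (\<lambda>q. f q *v w) p)) = 0"
    by (simp add: dderiv_g_inner vf_differentiable_at_f_const)
  then show ?thesis
    by (simp add: cov_vf_mult[OF differentiable_at_p(1)] cov_vf_const algebra_simps pt.F_skew)
qed

lemma dderiv_eta:
  "dderiv u (\<lambda>q. eta q \<bullet> v) p = eta p \<bullet> (christoffel_mat g u p *v v) + cov_vf g u xi p \<bullet> (g p *v v)"
proof -
  have "dderiv u (\<lambda>q. eta q \<bullet> v) p = dderiv u (\<lambda>q. v \<bullet> (g q *v xi q)) p"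
    by (rule dderiv_cong) (simp add: weak_acm_linear.G_x[OF pointwise_weak_acm_linear] inner_commute)
  also have "\<dots> = (christoffel_mat g u p *v v) \<bullet> (g p *v xi p) + v \<bullet> (g p *v cov_vf g u xi p)"
    by (simp add: dderiv_g_inner differentiable_at_p(4) cov_vf_const)
  finally show ?thesis by (simp add: pt.inner_G_x pt.G_inner_commute[of v])
qed

text \<open>Derivative of \<open>f\<^sup>2 = -Q + \<eta> \<otimes> \<xi>\<close>; the Christoffel terms cancel because
  they enter through the same identity applied to \<open>\<Gamma>(u) v\<close>.\<close>

lemma cov_f_squared:
  "cov_tf g u f p *v (f p *v v) + f p *v (cov_tf g u f p *v v) + cov_tf g u Q p *v v
    = (cov_vf g u xi p \<bullet> (g p *v v)) *\<^sub>R xi p + (eta p \<bullet> v) *\<^sub>R cov_vf g u xi p"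
proof -
  let ?\<Gamma>v = "christoffel_mat g u p *v v"
  have Qv: "vf_differentiable_at (\<lambda>q. Q q *v v) p"
    using vf_differentiable_at_mult[OF differentiable_at_p(2), of "\<lambda>_. v"] by simp
  have ffv: "vf_differentiable_at (\<lambda>q. f q *v (f q *v v)) p"
    by (rule vf_differentiable_at_mult[OF differentiable_at_p(1) vf_differentiable_at_f_const])
  have eta_v: "(\<lambda>q. eta q \<bullet> v) differentiable (at p)"
    by (rule inner_differentiable_at[OF differentiable_at_p(5) vf_differentiable_at_const])
  have "cov_vf g u (\<lambda>q. (f q *v (f q *v v) + Q q *v v) - (eta q \<bullet> v) *\<^sub>R xi q) p = 0"
    by (rule cov_vf_eq_0_open[OF open_U p_in_U])
      (simp add: weak_acm_linear.F_F_apply[OF pointwise_weak_acm_linear])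
  then have "cov_tf g u f p *v (f p *v v) + f p *v (cov_tf g u f p *v v + f p *v ?\<Gamma>v)
      + (cov_tf g u Q p *v v + Q p *v ?\<Gamma>v)
      - ((eta p \<bullet> ?\<Gamma>v + cov_vf g u xi p \<bullet> (g p *v v)) *\<^sub>R xi p + (eta p \<bullet> v) *\<^sub>R cov_vf g u xi p) = 0"
    by (simp add: cov_vf_diff cov_vf_add vf_differentiable_at_add vf_differentiable_at_scaleR
        cov_vf_mult cov_vf_scaleR cov_vf_const dderiv_eta differentiable_at_p
        vf_differentiable_at_f_const Qv ffv eta_v)
  moreover have "Q p *v ?\<Gamma>v = (eta p \<bullet> ?\<Gamma>v) *\<^sub>R xi p - f p *v (f p *v ?\<Gamma>v)"
    by (simp add: pt.F_F_apply)
  ultimately show ?thesis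
    by (simp add: algebra_simps)
qed

end

section \<open>Nearly Sasakian and nearly cosymplectic structures\<close>

definition weak_nearly ::
    "(real^'m::finite) set \<Rightarrow> (real^'m \<Rightarrow> real^'m^'m) \<Rightarrow> (real^'m \<Rightarrow> real^'m^'m) \<Rightarrow>
     (real^'m \<Rightarrow> real^'m) \<Rightarrow> (real^'m \<Rightarrow> real^'m) \<Rightarrow> (real^'m \<Rightarrow> real^'m^'m) \<Rightarrow> real \<Rightarrow> bool" where
  "weak_nearly U f Q xi eta g c \<longleftrightarrow> weak_acm U f Q xi eta g \<and>
     (\<forall>X Y. smooth_vf U X \<longrightarrow> smooth_vf U Y \<longrightarrow> (\<forall>p\<in>U.
        nablaT g f X Y p + nablaT g f Y X p
          = c *\<^sub>R ((2 * gv g p (X p) (Y p)) *\<^sub>R xi p - (eta p \<bullet> Y p) *\<^sub>R X p - (eta p \<bullet> X p) *\<^sub>R Y p)))"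

lemma weak_nearly_sasakian_eq: "weak_nearly_sasakian U f Q xi eta g = weak_nearly U f Q xi eta g 1"
  by (simp add: weak_nearly_sasakian_def weak_nearly_def)

lemma weak_nearly_cosymplectic_eq: "weak_nearly_cosymplectic U f Q xi eta g = weak_nearly U f Q xi eta g 0"
  by (simp add: weak_nearly_cosymplectic_def weak_nearly_def)

locale weak_nearly_at = weak_acm_at +
  fixes c :: real
  assumes nearly: "\<And>X Y. smooth_vf U X \<Longrightarrow> smooth_vf U Y \<Longrightarrow>
     nablaT g f X Y p + nablaT g f Y X p
       = c *\<^sub>R ((2 * gv g p (X p) (Y p)) *\<^sub>R xi p - (eta p \<bullet> Y p) *\<^sub>R X p - (eta p \<bullet> X p) *\<^sub>R Y p)"

lemma weak_nearly_atI: "weak_nearly U f Q xi eta g c \<Longrightarrow> p \<in> U \<Longrightarrow> weak_nearly_at U f Q xi eta g p c"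
  unfolding weak_nearly_def weak_nearly_at_def weak_nearly_at_axioms_def weak_acm_at_def by blast

context weak_nearly_at
begin

abbreviation A where "A u \<equiv> cov_vf g u xi p"
abbreviation S where "S \<equiv> cov_tf g (xi p) f p"

lemma S_apply: "S *v v = f p *v A v + c *\<^sub>R ((eta p \<bullet> v) *\<^sub>R xi p - v)"
proof -
  have "nablaT g f xi (\<lambda>_. v) p + nablaT g f (\<lambda>_. v) xi p
     = c *\<^sub>R ((2 * gv g p (xi p) v) *\<^sub>R xi p - (eta p \<bullet> v) *\<^sub>R xi p - (eta p \<bullet> xi p) *\<^sub>R v)"
    by (rule nearly[OF smooth_xi smooth_vf_const])
  also have "(2 * gv g p (xi p) v) *\<^sub>R xi p - (eta p \<bullet> v) *\<^sub>R xi p = (eta p \<bullet> v) *\<^sub>R xi p"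
    unfolding gv_def pt.x_inner_G by (simp add: scaleR_left_diff_distrib[symmetric])
  finally show ?thesis
    by (simp add: nablaT_eq_cov_tf differentiable_at_p cov_f_xi pt.e_x algebra_simps)
qed

lemma A_xi: "A (xi p) = 0"
proof -
  have "nablaT g f xi xi p + nablaT g f xi xi p
     = c *\<^sub>R ((2 * gv g p (xi p) (xi p)) *\<^sub>R xi p - (eta p \<bullet> xi p) *\<^sub>R xi p - (eta p \<bullet> xi p) *\<^sub>R xi p)"
    by (rule nearly[OF smooth_xi smooth_xi])
  also have "\<dots> = 0"
    unfolding gv_def pt.x_G_x pt.e_x by (simp add: scaleR_2)
  finally have "f p *v A (xi p) = 0"
    by (simp add: nablaT_eq_cov_tf differentiable_at_p cov_f_xi vec_eq_iff)
  then have "A (xi p) = (eta p \<bullet> A (xi p)) *\<^sub>R xi p"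
    by (rule pt.ker_F)
  then show ?thesis using eta_cov_xi by simp
qed

lemma S_xi: "S *v xi p = 0"
  using cov_f_xi[of "xi p"] A_xi by simp

lemma eta_S: "eta p \<bullet> (S *v w) = 0"
  using cov_f_skew[of "xi p" "xi p" w] by (simp add: pt.x_inner_G[symmetric] S_xi)

context
  assumes Qtilde_parallel: "Qtilde_parallel_ker U Q eta g"
begin

lemma cov_xi_Q_f: "cov_tf g (xi p) Q p *v (f p *v v) = 0"
proof -
  have "\<forall>q\<in>U. eta q \<bullet> (f q *v v) = 0"
    using weak_acm_linear.e_F[OF pointwise_weak_acm_linear] by blast
  then have "nablaT g (\<lambda>q. Q q - mat 1) (\<lambda>_. xi p) (\<lambda>q. f q *v v) p = 0"
    using Qtilde_parallel smooth_vf_const smooth_vf_matrix_vector_mult_const[OF open_U smooth_f] p_in_U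
    unfolding Qtilde_parallel_ker_def by blast
  moreover have "cov_tf g (xi p) (\<lambda>q. Q q - mat 1) p *v w = cov_tf g (xi p) Q p *v w" for w
    unfolding cov_tf_def dderiv_mat_diff[OF differentiable_at_p(2) tf_differentiable_at_const]
    by (simp add: algebra_simps matrix_vector_mul_assoc[symmetric])
  ultimately show ?thesis
    by (simp add: nablaT_eq_cov_tf tf_differentiable_at_diff differentiable_at_p
        vf_differentiable_at_f_const)
qed

lemma cov_xi_Q: "cov_tf g (xi p) Q p *v w = 0"
proof -
  define z where "z = matrix_inv (Q p) *v (w - (eta p \<bullet> w) *\<^sub>R xi p)"
  have "eta p \<bullet> z = 0"
    using pt.e_Q[of z] unfolding z_def by (simp add: pt.Q_Q_inv inner_diff_right pt.e_x)
  then have "w = f p *v (- (f p *v z)) + (eta p \<bullet> w) *\<^sub>R xi p"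
    using pt.F_F_apply[of z] unfolding z_def by (simp add: pt.Q_Q_inv matrix_vector_mult_uminus)
  moreover have "cov_tf g (xi p) Q p *v xi p = 0"
  proof -
    have "cov_vf g (xi p) (\<lambda>q. Q q *v xi q) p = cov_vf g (xi p) xi p"
      by (rule cov_vf_cong) (rule weak_acm_linear.Q_x[OF pointwise_weak_acm_linear])
    then show ?thesis by (simp add: cov_vf_mult differentiable_at_p A_xi)
  qed
  ultimately show ?thesis
    by (metis cov_xi_Q_f matrix_vector_right_distrib matrix_vector_mult_scaleR)
qed

lemma S_f_anticommute: "S *v (f p *v v) = - (f p *v (S *v v))"
  using cov_f_squared[of "xi p" v] cov_xi_Q[of v] A_xi by (simp add: eq_neg_iff_add_eq_0)

lemma S_Q_commute: "S *v (Q p *v v) = Q p *v (S *v v)"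
proof -
  have "S *v (f p *v (f p *v v)) = f p *v (f p *v (S *v v))"
    by (simp add: S_f_anticommute matrix_vector_mult_uminus)
  then show ?thesis
    by (simp add: pt.F_F_apply matrix_vector_mult_diff_distrib matrix_vector_mult_scaleR S_xi eta_S)
qed

lemma A_skew: "A u \<bullet> (g p *v v) = - (u \<bullet> (g p *v A v))"
proof (rule pt.skew_if_Q_comp_skew)
  define B where "B v = - (f p *v (S *v v)) - c *\<^sub>R (f p *v v)" for v
  show "Q p *v A v = B v" for v
  proof -
    have "Q p *v A v = - (f p *v (f p *v A v))"
      using pt.F_F_apply[of "A v"] eta_cov_xi by simp
    also have "\<dots> = B v"
      unfolding B_def S_apply by (simp add: algebra_simps pt.F_x)
    finally show ?thesis .
  qed
  show "B u \<bullet> (g p *v w) = - (u \<bullet> (g p *v B w))" for u w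
  proof -
    have "(f p *v (S *v u)) \<bullet> (g p *v w) = - ((S *v u) \<bullet> (g p *v (f p *v w)))"
      by (rule pt.F_skew)
    also have "\<dots> = u \<bullet> (g p *v (S *v (f p *v w)))"
      unfolding cov_f_skew by simp
    also have "\<dots> = - (u \<bullet> (g p *v (f p *v (S *v w))))"
      unfolding S_f_anticommute matrix_vector_mult_uminus inner_minus_right ..
    finally have "(f p *v (S *v u)) \<bullet> (g p *v w) = - (u \<bullet> (g p *v (f p *v (S *v w))))" .
    then show ?thesis
      unfolding B_def by (simp add: inner_diff_left inner_diff_right matrix_vector_mult_scaleR pt.F_skew
          matrix_vector_mult_diff_distrib matrix_vector_mult_uminus)
  qed
  show "B (Q p *v v) = Q p *v B v" for v
    unfolding B_def by (simp add: S_Q_commute pt.F_Q_commute matrix_vector_mult_diff_distrib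
        matrix_vector_mult_uminus matrix_vector_mult_scaleR)
qed

lemma killing_at:
  "dir xi (\<lambda>q. g q $ i $ j) p
      + (\<Sum>k\<in>UNIV. g p $ k $ j * pd i (\<lambda>q. xi q $ k) p)
      + (\<Sum>k\<in>UNIV. g p $ i $ k * pd j (\<lambda>q. xi q $ k) p) = 0"
proof -
  let ?ei = "axis i (1::real)" and ?ej = "axis j (1::real)"
  have "(\<lambda>q. g q $ i $ j) = (\<lambda>q. ?ei \<bullet> (g q *v ?ej))"
    by (simp add: inner_axis' matrix_vector_mult_axis)
  then have "dir xi (\<lambda>q. g q $ i $ j) p
      = (christoffel_mat g ?ei p *v xi p) \<bullet> (g p *v ?ej) + ?ei \<bullet> (g p *v (christoffel_mat g ?ej p *v xi p))"
    by (simp add: dir_eq_dderiv dderiv_g_inner cov_vf_const christoffel_mat_sym[OF open_U riemannian_g p_in_U])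
  moreover have "(\<Sum>k\<in>UNIV. g p $ k $ j * pd i (\<lambda>q. xi q $ k) p) = dderiv_vec xi ?ei p \<bullet> (g p *v ?ej)"
    by (simp add: inner_vec_def dderiv_vec_def dderiv_axis matrix_vector_mult_axis mult.commute)
  moreover have "(\<Sum>k\<in>UNIV. g p $ i $ k * pd j (\<lambda>q. xi q $ k) p) = ?ei \<bullet> (g p *v dderiv_vec xi ?ej p)"
    by (simp add: inner_axis' matrix_vector_mult_def dderiv_vec_def dderiv_axis)
  ultimately show ?thesis
    using A_skew[of ?ei ?ej] by (simp add: cov_vf_def algebra_simps)
qed

text \<open>With \<open>c = 0\<close> one has \<open>d\<eta>(u,v) = g(Au, v)\<close>, so a contact structure would force
  \<open>A = -f\<close> and then \<open>S = -f\<^sup>2\<close>, whose skewness kills \<open>g(fv, fv)\<close>.\<close>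

lemma f_eq_0_if_contact:
  assumes c0: "c = 0"
    and contact: "\<And>u v. d_eta eta (\<lambda>_. u) (\<lambda>_. v) p = gv g p u (f p *v v)"
  shows "f p = 0"
proof -
  have "d_eta eta (\<lambda>_. u) (\<lambda>_. v) p = A u \<bullet> (g p *v v)" for u v
  proof -
    have "lie_bracket (\<lambda>_. u) (\<lambda>_. v) p = 0"
      by (simp add: lie_bracket_def dir_eq_dderiv vec_eq_iff)
    then have "d_eta eta (\<lambda>_. u) (\<lambda>_. v) p = (1/2) * (A u \<bullet> (g p *v v) - A v \<bullet> (g p *v u))"
      using christoffel_mat_sym[OF open_U riemannian_g p_in_U, of u v]
      by (simp add: d_eta_def dir_eq_dderiv dderiv_eta)
    then show ?thesis
      using A_skew[of v u] pt.G_inner_commute[of v "A u"] by simp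
  qed
  then have A_f: "A u = - (f p *v u)" for u
    using contact pt.F_skew by (intro pt.G_nondegenerate) (simp add: gv_def)
  have "(f p *v v) \<bullet> (g p *v (f p *v v)) = 0" for v
  proof -
    have "S *v v = Q p *v v - (eta p \<bullet> v) *\<^sub>R xi p"
      using S_apply[of v] c0 by (simp add: A_f matrix_vector_mult_uminus pt.F_F_apply)
    moreover have "(S *v v) \<bullet> (g p *v v) = 0"
      using cov_f_skew[of "xi p" v v] pt.G_inner_commute[of v "S *v v"] by simp
    ultimately show ?thesis
      using pt.F_compatible[of v v] pt.Q_self_adjoint[of v v]
      by (simp add: inner_diff_left pt.x_inner_G)
  qed
  then have "f p *v v = 0" for v
    using pt.G_pos[of "f p *v v"] by fastforce
  then show ?thesis by (simp add: matrix_eq)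
qed

end

end

theorem weak_nearly_geodesic:
  assumes "weak_nearly U f Q xi eta g c" "p \<in> U"
  shows "nabla g xi xi p = 0"
  using weak_nearly_at.A_xi[OF weak_nearly_atI[OF assms]] by (simp add: nabla_eq_cov_vf)

theorem weak_nearly_killing:
  assumes "weak_nearly U f Q xi eta g c" "Qtilde_parallel_ker U Q eta g"
  shows "killing U g xi"
  unfolding killing_def using weak_nearly_at.killing_at weak_nearly_atI assms by blast

theorem weak_nearly_cosymplectic_not_contact:
  fixes U :: "(real^'m::finite) set"
  assumes "CARD('m) \<ge> 2" "U \<noteq> {}"
    and "weak_nearly_cosymplectic U f Q xi eta g" "Qtilde_parallel_ker U Q eta g"
  shows "\<not> weak_contact_metric U f Q xi eta g"
proof
  assume contact: "weak_contact_metric U f Q xi eta g"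
  obtain p where p: "p \<in> U" using assms(2) by blast
  have nearly: "weak_nearly_at U f Q xi eta g p 0"
    using assms(3) p by (intro weak_nearly_atI) (simp add: weak_nearly_cosymplectic_eq)
  have "f p = 0"
    using contact p smooth_vf_const unfolding weak_contact_metric_def
    by (intro weak_nearly_at.f_eq_0_if_contact[OF nearly assms(4)]) blast+
  moreover have "rank (f p) = CARD('m) - 1"
    using contact p unfolding weak_contact_metric_def weak_acm_def by blast
  ultimately show False using assms(1) by simp
qed

theorem mainTheorem7:
  assumes "odd CARD('m::finite)" and "CARD('m) \<ge> 3"
  shows
   "(\<forall>(U::(real^'m) set) f Q xi eta g.
       (weak_nearly_sasakian U f Q xi eta g \<or> weak_nearly_cosymplectic U f Q xi eta g) \<longrightarrow>
         (\<forall>p\<in>U. nabla g xi xi p = 0) \<and>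
         (Qtilde_parallel_ker U Q eta g \<longrightarrow> killing U g xi))
    \<and> \<not> (\<exists>(U::(real^'m) set) f Q xi eta g. U \<noteq> {} \<and>
         weak_nearly_cosymplectic U f Q xi eta g \<and> Qtilde_parallel_ker U Q eta g \<and>
         weak_contact_metric U f Q xi eta g)"
proof -
  have two_le_dim: "CARD('m) \<ge> 2" using assms(2) by simp
  show ?thesis
  proof (intro conjI allI impI ballI)
    fix U :: "(real^'m) set" and f Q xi eta g
    assume "weak_nearly_sasakian U f Q xi eta g \<or> weak_nearly_cosymplectic U f Q xi eta g"
    then obtain c where nearly: "weak_nearly U f Q xi eta g c"
      unfolding weak_nearly_sasakian_eq weak_nearly_cosymplectic_eq by blast
    show "nabla g xi xi p = 0" if "p \<in> U" for p
      by (rule weak_nearly_geodesic[OF nearly that])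
    show "killing U g xi" if "Qtilde_parallel_ker U Q eta g"
      by (rule weak_nearly_killing[OF nearly that])
  qed (use weak_nearly_cosymplectic_not_contact[OF two_le_dim] in blast)
qed

end
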